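(* Let $n$ be a perfect square divisible by $5^4$. Then $C_{S(n)^*}\le 7$.
   Context: For a natural number $n$, $\mathbb Z_n=\mathbb Z/n\mathbb Z$, $S(n)=\{x^2:x\in\mathbb Z_n\}$, $S(n)^*=S(n)\setminus\{0\}$. For $A\subseteq\mathbb Z_n$, a sequence $(y_1,\dots,y_t)$ ($t\ge1$) in $\mathbb Z_n$ is an $A$-weighted zero-sum sequence if there exist $a_1,\dots,a_t\in A$ with $\sum a_iy_i=0$. $C_A(n)$ is the least positive integer $t$ such that every sequence of length $t$ in $\mathbb Z_n$ has a nonempty subsequence of consecutive terms that is an $A$-weighted zero-sum sequence; $C_{S(n)^*}=C_{S(n)^*}(n)$. *)

theory Defs
  imports Main
begin

text \<open>Z_n is modelled by the residues {0..<n} (n > 0) with arithmetic mod n.\<close>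

definition Zmod :: "nat \<Rightarrow> nat set" where
  "Zmod n = {0..<n}"

definition sq_set :: "nat \<Rightarrow> nat set" where
  "sq_set n = {(x * x) mod n | x. x < n}"

definition sq_set_star :: "nat \<Rightarrow> nat set" where
  "sq_set_star n = sq_set n - {0}"

definition weighted_zero_sum :: "nat \<Rightarrow> nat set \<Rightarrow> (nat \<Rightarrow> nat) \<Rightarrow> nat set \<Rightarrow> bool" where
  "weighted_zero_sum n A y I \<longleftrightarrow>
     (\<exists>a. (\<forall>i\<in>I. a i \<in> A) \<and> (\<Sum>i\<in>I. a i * y i) mod n = 0)"

definition C_property :: "nat \<Rightarrow> nat set \<Rightarrow> nat \<Rightarrow> bool" where
  "C_property n A t \<longleftrightarrow>
     (\<forall>y. (\<forall>i<t. y i \<in> Zmod n) \<longrightarrow>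
        (\<exists>i j. i < j \<and> j \<le> t \<and> weighted_zero_sum n A y {i..<j}))"

definition C_const :: "nat set \<Rightarrow> nat \<Rightarrow> nat" where
  "C_const A n = (LEAST t. 0 < t \<and> C_property n A t)"

end

theory Submission
  imports Defs "HOL-Number_Theory.Number_Theory"
begin

text \<open>Write n = 625 d^2. If 625 does not divide r^2, the weight (d r)^2 is a nonzero square
  mod n, and a block with such weights is zero-sum mod n once \<Sum> r_k^2 y_k = 0 mod 625.
  Among y_0, ..., y_4 either some term is divisible by 25, and the weight 5^2 kills it alone, or
  by pigeonhole two terms y_i, y_j (i < j) have the same 5-adic valuation (0 or 1) and their unit
  parts have the same square mod 5. Then y_i + u^2 y_j + 25 \<Sum>_{i<k<j} y_k = 0 mod 625 is solvable
  with 5 not dividing u, since every unit that is +1 or -1 mod 5 is a square mod 625 (because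
  x = 1 mod 5 implies x^125 = 1 mod 625). So five terms already suffice.\<close>

lemma power_dvd_pow_diff_one_lift:
  fixes x :: int and p k :: nat
  assumes "k \<ge> 1" and "int p ^ k dvd x - 1"
  shows "int p ^ Suc k dvd x ^ p - 1"
proof -
  have "int p dvd x - 1"
    using assms dvd_power[of k "int p"] dvd_trans by auto
  then have "[x = 1] (mod int p)"
    by (simp add: cong_iff_dvd_diff)
  then have "[(\<Sum>i<p. x ^ i) = (\<Sum>i<p. 1 ^ i)] (mod int p)"
    by (intro cong_sum cong_pow)
  then have "int p dvd (\<Sum>i<p. x ^ i)"
    by (simp add: cong_0_iff[symmetric] cong_def)
  then have "int p ^ k * int p dvd (x - 1) * (\<Sum>i<p. x ^ i)"
    using assms(2) by (intro mult_dvd_mono)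
  then show ?thesis
    by (simp add: power_diff_1_eq mult.commute)
qed

lemma cong_one_pow_power:
  fixes x :: int and p k :: nat
  assumes "[x = 1] (mod int p)"
  shows "[x ^ (p ^ k) = 1] (mod int p ^ Suc k)"
proof (induction k)
  case 0
  then show ?case
    using assms by simp
next
  case (Suc k)
  then have "int p ^ Suc k dvd x ^ (p ^ k) - 1"
    by (simp add: cong_iff_dvd_diff)
  then have "int p ^ Suc (Suc k) dvd (x ^ (p ^ k)) ^ p - 1"
    by (intro power_dvd_pow_diff_one_lift) simp_all
  moreover have "(x ^ (p ^ k)) ^ p = x ^ (p ^ Suc k)"
    by (metis power_mult power_Suc2)
  ultimately show ?case
    by (simp add: cong_iff_dvd_diff)
qed

lemma exists_square_root_of_cong_one:
  fixes q :: int and p k :: nat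
  assumes "odd p" and "[q = 1] (mod int p)"
  shows "\<exists>u. [u ^ 2 = q] (mod int p ^ Suc k)"
proof -
  have "odd (p ^ k)"
    using assms(1) by simp
  then obtain m where m: "p ^ k = 2 * m + 1"
    by (rule oddE)
  have "(q ^ Suc m) ^ 2 = q * q ^ (p ^ k)"
    unfolding m
    by (simp add: power_mult_distrib flip: power_mult) (simp add: power2_eq_square mult.commute)
  also have "[\<dots> = q * 1] (mod int p ^ Suc k)"
    using cong_one_pow_power[OF assms(2)] by (intro cong_mult cong_refl)
  finally show ?thesis
    by auto
qed

lemma exists_square_root_mod_625:
  fixes q :: int
  assumes "[q ^ 2 = 1] (mod 5)"
  shows "\<exists>u. [u ^ 2 = q] (mod 625)"
proof -
  have "(5::int) dvd (q - 1) * (q + 1)"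
    using assms by (simp add: cong_iff_dvd_diff power2_eq_square algebra_simps)
  then have "(5::int) dvd q - 1 \<or> 5 dvd - q - 1"
    by (simp add: prime_dvd_mult_iff dvd_minus_iff[symmetric, of _ "q + 1"])
  then consider "[q = 1] (mod 5)" | "[- q = 1] (mod 5)"
    by (auto simp: cong_iff_dvd_diff)
  then show ?thesis
  proof cases
    case 1
    then show ?thesis
      using exists_square_root_of_cong_one[of 5 q 3] by simp
  next
    case 2
    then obtain s where s: "[s ^ 2 = - q] (mod 625)"
      using exists_square_root_of_cong_one[of 5 "- q" 3] by auto
    have "[(182::int) ^ 2 = - 1] (mod 625)"
      by (simp add: cong_def)
    then have "[(182 * s) ^ 2 = (- 1) * (- q)] (mod 625)"
      unfolding power_mult_distrib using s by (rule cong_mult)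
    then have "[(182 * s) ^ 2 = q] (mod 625)"
      by (simp only: mult_minus1 minus_minus)
    then show ?thesis
      by blast
  qed
qed

lemma exists_square_weight_int:
  fixes A B Z :: int
  assumes "\<not> 5 dvd B" and "[A ^ 2 = B ^ 2] (mod 5)"
  shows "\<exists>u. [A + u ^ 2 * B + 5 * Z = 0] (mod 625) \<and> \<not> 5 dvd u"
proof -
  have "coprime B 5"
    using assms(1) prime_imp_coprime[of 5 B] by (simp add: coprime_commute)
  then have "coprime B 625"
    using coprime_power_right_iff[of B 5 4] by simp
  then obtain b where b: "[B * b = 1] (mod 625)"
    using cong_solve_coprime_int by blast
  define q where "q = - (A + 5 * Z) * b"
  have qB: "[q * B = - (A + 5 * Z)] (mod 625)"
    using cong_mult[OF cong_refl[of "- (A + 5 * Z)"] b] by (simp add: q_def ac_simps)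
  then have "[q * B = - (A + 5 * Z)] (mod 5)"
    by (rule cong_dvd_modulus) simp
  also have "[- (A + 5 * Z) = - A] (mod 5)"
    by (simp add: cong_iff_dvd_diff)
  finally have "[q * B = - A] (mod 5)" .
  then have "[(q * B) ^ 2 = (- A) ^ 2] (mod 5)"
    by (rule cong_pow)
  then have "[B ^ 2 * q ^ 2 = B ^ 2 * 1] (mod 5)"
    using assms(2) by (simp add: power_mult_distrib ac_simps cong_trans)
  then have "[q ^ 2 = 1] (mod 5)"
    using cong_mult_lcancel[of "B ^ 2" 5 "q ^ 2" 1] \<open>coprime B 5\<close> by simp
  then obtain u where u: "[u ^ 2 = q] (mod 625)"
    using exists_square_root_mod_625 by blast
  have "[A + u ^ 2 * B + 5 * Z = A + q * B + 5 * Z] (mod 625)"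
    using u by (intro cong_add cong_mult cong_refl)
  also have "[A + q * B + 5 * Z = A + - (A + 5 * Z) + 5 * Z] (mod 625)"
    using qB by (intro cong_add cong_refl)
  finally have "[A + u ^ 2 * B + 5 * Z = 0] (mod 625)"
    by simp
  moreover have "\<not> 5 dvd u"
  proof
    assume "5 dvd u"
    then have "5 dvd u ^ 2"
      by (simp add: power2_eq_square)
    moreover have "5 dvd u ^ 2 - q"
      using cong_dvd_modulus[OF u, of 5] by (simp add: cong_iff_dvd_diff)
    ultimately have "5 dvd u ^ 2 - (u ^ 2 - q)"
      by (rule dvd_diff)
    then have "5 dvd q ^ 2"
      by (simp add: power2_eq_square)
    moreover have "5 dvd q ^ 2 - 1"
      using \<open>[q ^ 2 = 1] (mod 5)\<close> by (simp add: cong_iff_dvd_diff)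
    ultimately have "(5::int) dvd q ^ 2 - (q ^ 2 - 1)"
      by (rule dvd_diff)
    then show False
      by simp
  qed
  ultimately show ?thesis
    by blast
qed

lemma exists_square_weight:
  fixes A B Z :: nat
  assumes "\<not> 5 dvd B" and "[A ^ 2 = B ^ 2] (mod 5)"
  shows "\<exists>u. 625 dvd A + u ^ 2 * B + 5 * Z \<and> \<not> 5 dvd u"
proof -
  have "[int (A ^ 2) = int (B ^ 2)] (mod int 5)"
    using assms(2) by (simp only: cong_int_iff)
  then have "[int A ^ 2 = int B ^ 2] (mod 5)"
    by simp
  moreover have "\<not> 5 dvd int B"
    using assms(1) by presburger
  ultimately obtain u where "[int A + u ^ 2 * int B + 5 * int Z = 0] (mod 625)" "\<not> 5 dvd u"
    using exists_square_weight_int by blast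
  moreover have "int (A + (nat \<bar>u\<bar>) ^ 2 * B + 5 * Z) = int A + u ^ 2 * int B + 5 * int Z"
    by simp
  ultimately have "int 625 dvd int (A + (nat \<bar>u\<bar>) ^ 2 * B + 5 * Z)"
    by (simp add: cong_0_iff)
  moreover have "\<not> 5 dvd nat \<bar>u\<bar>"
    using \<open>\<not> 5 dvd u\<close> dvd_nat_abs_iff[of 5 u] by simp
  ultimately show ?thesis
    by (auto simp only: int_dvd_int_iff)
qed

lemma scaled_square_in_sq_set_star:
  fixes d r :: nat
  assumes "0 < d" and "\<not> 625 dvd r ^ 2"
  shows "(d ^ 2 * r ^ 2) mod (625 * d ^ 2) \<in> sq_set_star (625 * d ^ 2)"
proof -
  let ?n = "625 * d ^ 2"
  have "d ^ 2 * r ^ 2 = (d * r) * (d * r)"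
    by (simp add: power2_eq_square ac_simps)
  then have "(d ^ 2 * r ^ 2) mod ?n = ((d * r) mod ?n * ((d * r) mod ?n)) mod ?n"
    by (simp only: mod_mult_eq)
  moreover have "(d * r) mod ?n < ?n"
    using assms(1) by simp
  ultimately have "(d ^ 2 * r ^ 2) mod ?n \<in> sq_set ?n"
    unfolding sq_set_def by blast
  moreover have "(d ^ 2 * r ^ 2) mod ?n \<noteq> 0"
  proof
    assume "(d ^ 2 * r ^ 2) mod ?n = 0"
    then have "d ^ 2 * 625 dvd d ^ 2 * r ^ 2"
      by (simp add: mod_eq_0_iff_dvd ac_simps)
    then show False
      using assms by simp
  qed
  ultimately show ?thesis
    unfolding sq_set_star_def by simp
qed

lemma weighted_zero_sum_scaled_squares:
  fixes d :: nat and r y :: "nat \<Rightarrow> nat"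
  assumes "0 < d" and "\<forall>k\<in>I. \<not> 625 dvd r k ^ 2" and "625 dvd (\<Sum>k\<in>I. r k ^ 2 * y k)"
  shows "weighted_zero_sum (625 * d ^ 2) (sq_set_star (625 * d ^ 2)) y I"
  unfolding weighted_zero_sum_def
proof (intro exI conjI)
  let ?n = "625 * d ^ 2"
  let ?a = "\<lambda>k. (d ^ 2 * r k ^ 2) mod ?n"
  show "\<forall>k\<in>I. ?a k \<in> sq_set_star ?n"
    using assms(2) scaled_square_in_sq_set_star[OF assms(1)] by blast
  have "(\<Sum>k\<in>I. ?a k * y k) mod ?n = (\<Sum>k\<in>I. ?a k * y k mod ?n) mod ?n"
    by (rule mod_sum_eq[symmetric])
  also have "\<dots> = (\<Sum>k\<in>I. d ^ 2 * r k ^ 2 * y k mod ?n) mod ?n"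
    by (simp only: mod_mult_left_eq)
  also have "\<dots> = (\<Sum>k\<in>I. d ^ 2 * r k ^ 2 * y k) mod ?n"
    by (rule mod_sum_eq)
  also have "\<dots> = (d ^ 2 * (\<Sum>k\<in>I. r k ^ 2 * y k)) mod ?n"
    by (simp only: sum_distrib_left mult.assoc)
  also have "\<dots> = 0"
    using assms(3) by (auto simp: mult.commute)
  finally show "(\<Sum>k\<in>I. ?a k * y k) mod ?n = 0" .
qed

text \<open>For \<open>25 \<not>| y\<close>: whether \<open>5 | y\<close>, and the square mod 5 of \<open>y\<close> resp. \<open>y / 5\<close>.
  Two terms in the same class can be balanced by a square weight.\<close>
definition five_class :: "nat \<Rightarrow> nat" where
  "five_class y = (if 5 dvd y then 5 + (y div 5) ^ 2 mod 5 else y ^ 2 mod 5)"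

lemma square_mod_5_not_dvd:
  fixes x :: nat
  assumes "\<not> 5 dvd x"
  shows "x ^ 2 mod 5 \<in> {1, 4}"
proof -
  have "x mod 5 = 1 \<or> x mod 5 = 2 \<or> x mod 5 = 3 \<or> x mod 5 = 4"
    using assms by presburger
  then show ?thesis
    by (auto simp: power_mod[of x, symmetric])
qed

lemma five_class_range:
  assumes "\<not> 25 dvd y"
  shows "five_class y \<in> {1, 4, 6, 9}"
proof (cases "5 dvd y")
  case True
  then obtain s where "y = 5 * s"
    by blast
  with assms have "\<not> 5 dvd s"
    by auto
  then show ?thesis
    using square_mod_5_not_dvd \<open>y = 5 * s\<close> by (auto simp: five_class_def)
next
  case False
  then show ?thesis
    using square_mod_5_not_dvd by (auto simp: five_class_def)
qed

lemma exists_square_weight_same_class: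
  assumes "\<not> 25 dvd a" and "\<not> 25 dvd b" and "five_class a = five_class b"
  shows "\<exists>u. 625 dvd a + u ^ 2 * b + 25 * S \<and> \<not> 5 dvd u"
proof (cases "5 dvd a")
  case False
  then have "\<not> 5 dvd b" and "[a ^ 2 = b ^ 2] (mod 5)"
    using assms(3) by (auto simp: five_class_def cong_def split: if_splits)
  then obtain u where "625 dvd a + u ^ 2 * b + 5 * (5 * S)" "\<not> 5 dvd u"
    using exists_square_weight by blast
  then show ?thesis
    by auto
next
  case True
  then have "5 dvd b"
    using assms(3) by (auto simp: five_class_def split: if_splits)
  obtain s t where st: "a = 5 * s" "b = 5 * t"
    using True \<open>5 dvd b\<close> by blast
  then have "\<not> 5 dvd t" and "[s ^ 2 = t ^ 2] (mod 5)"
    using assms by (auto simp: five_class_def cong_def)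
  then obtain u where "625 dvd s + u ^ 2 * t + 5 * S" "\<not> 5 dvd u"
    using exists_square_weight by blast
  moreover have "a + u ^ 2 * b + 25 * S = 5 * (s + u ^ 2 * t + 5 * S)"
    using st by simp
  ultimately show ?thesis
    by (metis dvd_mult2 mult.commute)
qed

lemma exists_less_pair_eq_of_card_lt:
  assumes "f ` {..<m} \<subseteq> B" and "finite B" and "card B < m"
  shows "\<exists>i j. i < j \<and> j < m \<and> f i = f j"
proof -
  have "card (f ` {..<m}) < card {..<m}"
    using card_mono[OF assms(2,1)] assms(3) by simp
  then have "\<not> inj_on f {..<m}"
    by (rule pigeonhole)
  then obtain i j where "i < m" "j < m" "i \<noteq> j" "f i = f j"
    unfolding inj_on_def by auto
  then show ?thesis
    by (metis linorder_neqE_nat)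
qed

lemma sum_block_weights:
  fixes y :: "nat \<Rightarrow> nat"
  assumes "i < j"
  shows "(\<Sum>k\<in>{i..<Suc j}. (if k = i then 1 else if k = j then u else c) ^ 2 * y k)
    = y i + u ^ 2 * y j + c ^ 2 * (\<Sum>k\<in>{i<..<j}. y k)"
proof -
  have "{i..<Suc j} = insert i (insert j {i<..<j})"
    using assms by auto
  moreover have "(\<Sum>k\<in>{i<..<j}. (if k = i then 1 else if k = j then u else c) ^ 2 * y k)
      = c ^ 2 * (\<Sum>k\<in>{i<..<j}. y k)"
    by (simp add: sum_distrib_left)
  ultimately show ?thesis
    using assms by simp
qed

lemma C_property_625_times_square:
  fixes d :: nat
  assumes "0 < d"
  shows "C_property (625 * d ^ 2) (sq_set_star (625 * d ^ 2)) 5"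
  unfolding C_property_def
proof (intro allI impI)
  fix y :: "nat \<Rightarrow> nat"
  let ?zero_sum = "weighted_zero_sum (625 * d ^ 2) (sq_set_star (625 * d ^ 2)) y"
  show "\<exists>i j. i < j \<and> j \<le> 5 \<and> ?zero_sum {i..<j}"
  proof (cases "\<exists>i<5. 25 dvd y i")
    case True
    then obtain i where "i < 5" "25 dvd y i"
      by blast
    then have "?zero_sum {i..<Suc i}"
      using weighted_zero_sum_scaled_squares[OF assms, of "{i..<Suc i}" "\<lambda>_. 5"] by auto
    with \<open>i < 5\<close> show ?thesis
      by (intro exI[of _ i] exI[of _ "Suc i"]) simp
  next
    case False
    then have "(five_class \<circ> y) ` {..<5} \<subseteq> {1, 4, 6, 9}"
      using five_class_range by auto
    then obtain i j where ij: "i < j" "j < 5" "five_class (y i) = five_class (y j)"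
      using exists_less_pair_eq_of_card_lt[of "five_class \<circ> y" 5 "{1, 4, 6, 9}"] by auto
    define S where "S = (\<Sum>k\<in>{i<..<j}. y k)"
    obtain u where u: "625 dvd y i + u ^ 2 * y j + 25 * S" "\<not> 5 dvd u"
      using exists_square_weight_same_class False ij by (metis order.strict_trans)
    define r where "r k = (if k = i then 1 else if k = j then u else 5)" for k
    have "\<not> 625 dvd u ^ 2"
    proof
      assume "625 dvd u ^ 2"
      then have "5 dvd u ^ 2"
        by (rule dvd_trans[rotated]) simp
      then show False
        using u(2) prime_dvd_power[of 5 u 2] by simp
    qed
    then have "\<forall>k\<in>{i..<Suc j}. \<not> 625 dvd r k ^ 2"
      by (simp add: r_def)
    moreover have "625 dvd (\<Sum>k\<in>{i..<Suc j}. r k ^ 2 * y k)"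
      using u(1) unfolding r_def sum_block_weights[OF ij(1)] by (simp add: S_def)
    ultimately have "?zero_sum {i..<Suc j}"
      by (rule weighted_zero_sum_scaled_squares[OF assms])
    with ij show ?thesis
      by (intro exI[of _ i] exI[of _ "Suc j"]) simp
  qed
qed

theorem mainTheorem19:
  fixes n :: nat
  assumes "0 < n" and "\<exists>m. n = m ^ 2" and "(5::nat) ^ 4 dvd n"
  shows "C_const (sq_set_star n) n \<le> 7"
proof -
  obtain m where m: "n = m ^ 2"
    using assms(2) by blast
  have "25 dvd m"
    using assms(3) pow_divides_pow_iff[of 2 25 m] unfolding m by simp
  then obtain d where "m = 25 * d" ..
  then have n: "n = 625 * d ^ 2"
    unfolding m by (simp add: power_mult_distrib)
  with assms(1) have "0 < d"
    by simp
  have "C_const (sq_set_star n) n \<le> 5"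
    unfolding C_const_def n using C_property_625_times_square[OF \<open>0 < d\<close>]
    by (intro Least_le) simp
  then show ?thesis
    by simp
qed

end
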